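(* Let $m\neq\pm1$ be a square-free integer, $p$ a prime, $k$ a positive integer, $\alpha$ a root of $X^{p^k}-m$ and $M=\mathbb{Q}(\alpha)$. Let $r$ be the remainder of $m$ modulo $p^{k+1}$ and $s:=v_p(m^p-m)-1$. For $t\in\mathbb{N}$ let $$h^{(r)}_t(X):=X^{p^k-p^{k-t}}+rX^{p^k-2p^{k-t}}+\ldots+r^{p^t-2}X^{p^{k-t}}+r^{p^t-1}=\frac{X^{p^k}-r^{p^t}}{X^{p^{k-t}}-r}\in\mathbb{Z}[X].$$ Then for every integer $t$ with $0\leq t\leq \min\{s,k\}$, the element $\frac{1}{p^t}h^{(r)}_t(\alpha)\in\mathbb{Q}(\alpha)$ is an algebraic integer.
   Context: $v_p$ denotes the $p$-adic valuation on $\mathbb{Q}$. *)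

theory Defs
  imports Complex_Main "HOL-Computational_Algebra.Computational_Algebra"
begin

definition h_poly :: "int \<Rightarrow> nat \<Rightarrow> nat \<Rightarrow> nat \<Rightarrow> int poly" where
  "h_poly r p k t = (\<Sum>i<p ^ t. monom (r ^ i) ((p ^ t - 1 - i) * p ^ (k - t)))"

end

theory Submission
  imports Defs "HOL-Number_Theory.Cong"
begin

text \<open>Put \<open>N = p ^ t\<close>, \<open>\<beta> = \<alpha> ^ p ^ (k - t)\<close> and \<open>w = \<beta> - r\<close>, so that
  \<open>h\<^sub>t(\<alpha>) = (\<beta> ^ N - r ^ N) / w\<close> and \<open>\<beta> ^ N = m\<close>. From \<open>m ^ p \<equiv> m\<close> and \<open>r \<equiv> m\<close> modulo
  \<open>p ^ (t + 1)\<close> one gets \<open>m - r ^ N = N e\<close> with \<open>p dvd e\<close>, so \<open>u = h\<^sub>t(\<alpha>) / N\<close> satisfies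
  \<open>u w = e\<close>. Expanding \<open>\<beta> = r + w\<close> binomially gives
  \<open>N u = \<Sum>j<N. (N choose j+1) r ^ (N-1-j) w ^ j\<close>; multiplying by \<open>u ^ (N - 1)\<close> and replacing
  each \<open>(u w) ^ j\<close> by \<open>e ^ j\<close> yields a monic equation for \<open>u\<close>. Its coefficients
  \<open>(N choose j+1) e ^ j / N \<cdot> r ^ (N-1-j)\<close> are integers because \<open>p ^ t\<close> divides
  \<open>(p ^ t choose j+1) p ^ j\<close>.\<close>

lemma prime_power_dvd_binomial_mult_power:
  fixes p t j :: nat
  assumes "prime p" and "j < p ^ t"
  shows "p ^ t dvd (p ^ t choose Suc j) * p ^ j"
proof -
  define a where "a = multiplicity p (Suc j)"
  obtain q where q: "Suc j = p ^ a * q" "\<not> p dvd q"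
    using multiplicity_decompose'[of "Suc j" p] assms(1) unfolding a_def
    by (metis nat.distinct(1) not_prime_unit)
  have "Suc j * (p ^ t choose Suc j) = p ^ t * (p ^ t - 1 choose j)"
    using Suc_times_binomial[of j "p ^ t - 1"] assms(1) by (simp add: prime_gt_0_nat)
  then have "p ^ t dvd q * (p ^ a * (p ^ t choose Suc j))"
    by (simp add: q(1) mult_ac)
  moreover have "coprime (p ^ t) q"
    using assms(1) q(2) by (simp add: prime_imp_coprime coprime_power_left_iff)
  ultimately have "p ^ t dvd p ^ a * (p ^ t choose Suc j)"
    using coprime_dvd_mult_right_iff by blast
  moreover have "a \<le> j"
  proof -
    have "a < 2 ^ a" by (rule less_exp)
    also have "\<dots> \<le> p ^ a" using prime_ge_2_nat[OF assms(1)] by (simp add: power_mono)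
    also have "\<dots> \<le> Suc j" using q(1) by (metis dvd_imp_le dvd_triv_left zero_less_Suc)
    finally show ?thesis by simp
  qed
  then have "p ^ a * (p ^ t choose Suc j) dvd (p ^ t choose Suc j) * p ^ j"
    by (simp add: le_imp_power_dvd mult.commute)
  ultimately show ?thesis by (rule dvd_trans)
qed

lemma algebraic_int_of_monic_equation:
  fixes u :: "'a :: field"
  assumes "\<And>j. j < n \<Longrightarrow> c j \<in> \<int>" and "u ^ n = (\<Sum>j<n. c j * u ^ j)"
  shows "algebraic_int u"
proof
  define P where "P = monom 1 n - (\<Sum>j<n. monom (c j) j)"
  have coeff_P: "coeff P i = (if i = n then 1 else 0) - (if i < n then c i else 0)" for i
    by (simp add: P_def coeff_sum coeff_monom)
  have "degree P = n"
    by (rule antisym) (auto simp: coeff_P intro: degree_le le_degree)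
  then show "lead_coeff P = 1" by (simp add: coeff_P)
  show "\<forall>i. coeff P i \<in> \<int>" using assms(1) by (simp add: coeff_P)
  show "poly P u = 0" using assms(2) by (simp add: P_def poly_sum poly_monom)
qed

lemma diff_mult_binomial_shift_eq_power_diff:
  fixes x y :: "'a :: comm_ring_1"
  shows "(x - y) * (\<Sum>j<n. of_nat (n choose Suc j) * y ^ (n - Suc j) * (x - y) ^ j) = x ^ n - y ^ n"
proof -
  have "((x - y) + y) ^ n = y ^ n + (x - y) * (\<Sum>j<n. of_nat (n choose Suc j) * y ^ (n - Suc j) * (x - y) ^ j)"
    unfolding binomial_ring lessThan_Suc_atMost[symmetric] sum.lessThan_Suc_shift sum_distrib_left
    by (simp add: mult_ac)
  then show ?thesis by simp
qed

lemma geometric_quotient_eq_binomial_shift: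
  fixes x y :: "'a :: idom"
  shows "(\<Sum>i<n. y ^ i * x ^ (n - Suc i))
       = (\<Sum>j<n. of_nat (n choose Suc j) * y ^ (n - Suc j) * (x - y) ^ j)"
proof (cases "x = y")
  case True
  then show ?thesis
    by (cases n) (simp_all add: sum.lessThan_Suc_shift del: binomial_Suc_Suc sum.lessThan_Suc flip: power_add)
next
  case False
  have "(x - y) * (\<Sum>i<n. y ^ i * x ^ (n - Suc i)) = x ^ n - y ^ n"
    by (simp add: power_diff_sumr2 sum.nat_diff_reindex[where g = "\<lambda>i. y ^ i * x ^ (n - Suc i)", symmetric])
  then have "(x - y) * (\<Sum>i<n. y ^ i * x ^ (n - Suc i))
      = (x - y) * (\<Sum>j<n. of_nat (n choose Suc j) * y ^ (n - Suc j) * (x - y) ^ j)"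
    by (simp only: diff_mult_binomial_shift_eq_power_diff)
  with False show ?thesis by simp
qed

lemma cong_power_power_self:
  fixes a q :: "'a :: unique_euclidean_semiring"
  assumes "[a ^ p = a] (mod q)"
  shows "[a ^ (p ^ i) = a] (mod q)"
proof (induction i)
  case (Suc i)
  have "a ^ (p ^ Suc i) = (a ^ (p ^ i)) ^ p"
    by (simp flip: power_mult add: mult.commute)
  also have "[\<dots> = a ^ p] (mod q)" using Suc by (rule cong_pow)
  finally show ?case using assms by (rule cong_trans)
qed simp

lemma map_poly_of_int_sum:
  "map_poly (of_int :: int \<Rightarrow> 'a :: comm_ring_1) (\<Sum>i\<in>A. f i) = (\<Sum>i\<in>A. map_poly of_int (f i))"
  by (induction A rule: infinite_finite_induct) (simp_all add: poly_eq_iff coeff_map_poly)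

lemma poly_h_poly:
  fixes x :: "'a :: comm_ring_1"
  shows "poly (map_poly of_int (h_poly r p k t)) x
       = (\<Sum>i<p ^ t. of_int r ^ i * (x ^ p ^ (k - t)) ^ (p ^ t - Suc i))"
  unfolding h_poly_def map_poly_of_int_sum poly_sum
  by (intro sum.cong refl) (simp add: map_poly_monom poly_monom power_mult mult.commute)

lemma algebraic_int_of_binomial_relation:
  fixes u w :: "'a :: field_char_0" and r e :: int
  assumes N: "N > 0"
    and u: "of_nat N * u = (\<Sum>j<N. of_nat (N choose Suc j) * of_int r ^ (N - Suc j) * w ^ j)"
    and uw: "u * w = of_int e"
    and dvd: "\<And>j. j < N \<Longrightarrow> int N dvd int (N choose Suc j) * e ^ j"
  shows "algebraic_int u"
proof -
  define c :: "nat \<Rightarrow> 'a" where "c j = of_nat (N choose Suc j) * of_int e ^ j / of_nat N * of_int r ^ (N - Suc j)" for j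
  have c_int: "c j \<in> \<int>" if j: "j < N" for j
  proof -
    obtain q where "int (N choose Suc j) * e ^ j = int N * q"
      using dvd[OF j] by blast
    then have "of_nat (N choose Suc j) * of_int e ^ j = (of_nat N * of_int q :: 'a)"
      by (metis of_int_mult of_int_of_nat_eq of_int_power)
    then have q: "of_nat (N choose Suc j) * of_int e ^ j / of_nat N = (of_int q :: 'a)"
      using N by simp
    show ?thesis unfolding c_def q by simp
  qed
  have "of_nat N * u ^ N = u ^ (N - 1) * (of_nat N * u)"
    using power_minus_mult[OF N, of u] by (simp add: mult_ac)
  also have "\<dots> = (\<Sum>j<N. of_nat (N choose Suc j) * of_int r ^ (N - Suc j) * (u * w) ^ j * u ^ (N - Suc j))"
    unfolding u sum_distrib_left
  proof (intro sum.cong refl)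
    fix j assume "j \<in> {..<N}"
    then have "u ^ (N - 1) = u ^ j * u ^ (N - Suc j)" by (simp flip: power_add)
    then show "u ^ (N - 1) * (of_nat (N choose Suc j) * of_int r ^ (N - Suc j) * w ^ j)
        = of_nat (N choose Suc j) * of_int r ^ (N - Suc j) * (u * w) ^ j * u ^ (N - Suc j)"
      by (simp add: power_mult_distrib mult_ac)
  qed
  also have "\<dots> = of_nat N * (\<Sum>j<N. c j * u ^ (N - Suc j))"
    using N by (simp add: uw c_def sum_distrib_left mult_ac)
  finally have "u ^ N = (\<Sum>j<N. c j * u ^ (N - Suc j))"
    using N by simp
  also have "\<dots> = (\<Sum>i<N. c (N - Suc i) * u ^ i)"
    by (rule sum.nat_diff_reindex[symmetric, THEN trans]) (auto intro!: sum.cong simp: Suc_diff_Suc)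
  finally show ?thesis
    by (rule algebraic_int_of_monic_equation[rotated]) (use c_int in auto)
qed

lemma algebraic_int_geometric_quotient_div_prime_power:
  fixes x :: "'a :: field_char_0" and m r :: int
  assumes p: "prime p" and x: "x ^ p ^ t = of_int m" and dvd: "int p ^ Suc t dvd m - r ^ p ^ t"
  shows "algebraic_int ((\<Sum>i<p ^ t. of_int r ^ i * x ^ (p ^ t - Suc i)) / of_nat (p ^ t))"
proof -
  define N where "N = p ^ t"
  define R :: 'a where "R = of_int r"
  define u where "u = (\<Sum>i<N. R ^ i * x ^ (N - Suc i)) / of_nat N"
  have N: "N > 0" using p by (simp add: N_def prime_gt_0_nat)
  obtain e where e: "m - r ^ N = int N * e" and "int p dvd e"
  proof -
    obtain c where "m - r ^ N = int p ^ Suc t * c"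
      using dvd unfolding N_def by (rule dvdE)
    then show thesis by (intro that[of "int p * c"]) (simp_all add: N_def mult_ac)
  qed
  have u: "of_nat N * u = (\<Sum>j<N. of_nat (N choose Suc j) * R ^ (N - Suc j) * (x - R) ^ j)"
    using N by (simp add: u_def geometric_quotient_eq_binomial_shift)
  have uw: "u * (x - R) = of_int e"
  proof -
    have "of_nat N * (u * (x - R)) = (x - R) * (of_nat N * u)"
      by (simp add: mult_ac)
    also have "\<dots> = x ^ N - R ^ N"
      by (simp only: u diff_mult_binomial_shift_eq_power_diff)
    also have "\<dots> = of_int (m - r ^ N)"
      using x by (simp add: N_def R_def)
    also have "\<dots> = of_nat N * of_int e"
      by (simp add: e)
    finally show ?thesis using N by simp
  qed
  have "int N dvd int (N choose Suc j) * e ^ j" if "j < N" for j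
  proof -
    have "int N dvd int (N choose Suc j) * int p ^ j"
      using prime_power_dvd_binomial_mult_power[OF p] that unfolding N_def
      by (metis of_nat_dvd_iff of_nat_mult of_nat_power)
    also have "\<dots> dvd int (N choose Suc j) * e ^ j"
      using \<open>int p dvd e\<close> by (simp add: dvd_power_same)
    finally show ?thesis .
  qed
  then have "algebraic_int u"
    using algebraic_int_of_binomial_relation[OF N u[unfolded R_def] uw[unfolded R_def]] by blast
  then show ?thesis by (simp add: u_def N_def R_def)
qed

theorem lemma3p1:
  fixes m :: int and p k t :: nat and \<alpha> :: complex
  assumes "squarefree m" and "m \<noteq> 1" and "m \<noteq> -1"
    and "prime p" and "k > 0"
    and "\<alpha> ^ (p ^ k) = of_int m"
    and "int t \<le> min (int (multiplicity (int p) (m ^ p - m)) - 1) (int k)"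
  shows "algebraic_int
           (poly (map_poly of_int (h_poly (m mod (int p ^ (k + 1))) p k t)) \<alpha> / of_nat (p ^ t))"
proof -
  define r where "r = m mod (int p ^ (k + 1))"
  define \<beta> where "\<beta> = \<alpha> ^ p ^ (k - t)"
  have "t \<le> k" and "Suc t \<le> multiplicity (int p) (m ^ p - m)"
    using assms(7) by simp_all
  have "\<beta> ^ p ^ t = of_int m"
    using \<open>t \<le> k\<close> assms(6) by (simp add: \<beta>_def flip: power_mult power_add)
  have "[m ^ p = m] (mod int p ^ Suc t)"
    using multiplicity_dvd'[OF \<open>Suc t \<le> _\<close>] by (simp add: cong_iff_dvd_diff)
  then have m_power: "[m ^ p ^ t = m] (mod int p ^ Suc t)"
    by (rule cong_power_power_self)
  have "[r = m] (mod int p ^ Suc t)"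
  proof (rule cong_dvd_modulus)
    show "[r = m] (mod int p ^ (k + 1))" by (simp add: r_def cong_def)
    show "int p ^ Suc t dvd int p ^ (k + 1)" using \<open>t \<le> k\<close> by (simp add: le_imp_power_dvd)
  qed
  then have "[r ^ p ^ t = m] (mod int p ^ Suc t)"
    by (rule cong_trans[OF cong_pow m_power])
  then have "int p ^ Suc t dvd m - r ^ p ^ t"
    by (simp add: cong_iff_dvd_diff dvd_diff_commute)
  from algebraic_int_geometric_quotient_div_prime_power[OF assms(4) \<open>\<beta> ^ p ^ t = _\<close> this]
  show ?thesis
    by (simp only: poly_h_poly r_def \<beta>_def)
qed

end
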